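(* Take any $\theta\in(0,1]$. a) If $\widetilde F$ is a probability distribution function on $[0,\infty)$, then $\widetilde F=\widetilde F_{(\mathrm{Exp},\theta)}$ iff $\widetilde F(t)=(1-\theta)+\theta\int_0^t[1-\widetilde F(s)]\,ds$ for all $t\ge0$. b) If $\widetilde\Phi$ is a stationary sequence of random variables in $[0,\infty)$ with finite-dimensional distribution functions $\widetilde F^{[d]}$ (where $\widetilde F^{[0]}:=1$), then $\mathrm{law}(\widetilde\Phi)=\mathrm{law}(\widetilde\Phi_{(\mathrm{Exp},\theta)})$ iff $$\widetilde F^{[d+1]}(t_0,t_1,\ldots,t_d)=(1-\theta)\widetilde F^{[d]}(t_1,\ldots,t_d)+\theta\int_0^{t_0}[\widetilde F^{[d]}(t_1,\ldots,t_d)-\widetilde F^{[d+1]}(s,t_1,\ldots,t_d)]\,ds$$ whenever $d\ge0$ and $t_j\ge0$.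
   Context: $\widetilde F_{(\mathrm{Exp},\theta)}(t):=(1-\theta)+\theta(1-e^{-\theta t})$, $t\ge0$, and $\widetilde\Phi_{(\mathrm{Exp},\theta)}$ is an iid sequence each distributed according to $\widetilde F_{(\mathrm{Exp},\theta)}$. For $\widetilde\Phi=(\widetilde\varphi^{(j)})_{j\ge0}$, $\widetilde F^{[d]}(t_0,\ldots,t_{d-1}):=\Pr[\widetilde\varphi^{(0)}\le t_0,\ldots,\widetilde\varphi^{(d-1)}\le t_{d-1}]$. *)

theory Defs
  imports "HOL-Probability.Probability"
begin

definition Fexp :: "real \<Rightarrow> real \<Rightarrow> real" where
  "Fexp \<theta> t = (if t < 0 then 0 else (1 - \<theta>) + \<theta> * (1 - exp (- \<theta> * t)))"

definition prob_distfun_nonneg :: "(real \<Rightarrow> real) \<Rightarrow> bool" where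
  "prob_distfun_nonneg F \<longleftrightarrow> mono F \<and> (\<forall>t. continuous (at_right t) F)
     \<and> (\<forall>t<0. F t = 0) \<and> (F \<longlongrightarrow> 1) at_top"

definition exp_law :: "real \<Rightarrow> real measure" where
  "exp_law \<theta> = interval_measure (Fexp \<theta>)"

definition seq_law :: "'a measure \<Rightarrow> (nat \<Rightarrow> 'a \<Rightarrow> real) \<Rightarrow> (nat \<Rightarrow> real) measure" where
  "seq_law M X = distr M (PiM UNIV (\<lambda>_. borel)) (\<lambda>\<omega> i. X i \<omega>)"

definition exp_seq_law :: "real \<Rightarrow> (nat \<Rightarrow> real) measure" where
  "exp_seq_law \<theta> = PiM UNIV (\<lambda>_. exp_law \<theta>)"

definition stationary_seq :: "'a measure \<Rightarrow> (nat \<Rightarrow> 'a \<Rightarrow> real) \<Rightarrow> bool" where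
  "stationary_seq M X \<longleftrightarrow> seq_law M (\<lambda>i. X (Suc i)) = seq_law M X"

definition fdd :: "'a measure \<Rightarrow> (nat \<Rightarrow> 'a \<Rightarrow> real) \<Rightarrow> nat \<Rightarrow> (nat \<Rightarrow> real) \<Rightarrow> real" where
  "fdd M X d t = measure M {\<omega> \<in> space M. \<forall>j<d. X j \<omega> \<le> t j}"

end

theory Submission
  imports Defs "HOL-Real_Asymp.Real_Asymp"
begin

text \<open>For monotone \<open>H\<close>, the equation \<open>H t = (1 - \<theta>) c + \<theta> \<integral>\<^sub>0\<^sup>t (c - H)\<close> says that the
  primitive \<open>I\<close> of \<open>c - H\<close> solves the linear ODE \<open>I' = \<theta> (c - I)\<close> with \<open>I 0 = 0\<close>; hence
  \<open>I t = c (1 - exp (- \<theta> t))\<close> and \<open>H = c \<cdot> Fexp \<theta>\<close> on \<open>[0, \<infinity>)\<close>. Part a) is the case \<open>c = 1\<close>.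
  For part b), apply this to \<open>H s = fdd M X (Suc d) (t(0 := s))\<close> and
  \<open>c = fdd M X d (\<lambda>j. t (Suc j))\<close>: by induction on \<open>d\<close>, the recursion holds iff every
  \<open>fdd M X n t\<close> equals \<open>\<Prod>j<n. Fexp \<theta> (t j)\<close> (a negative \<open>t j\<close> makes both sides vanish, since
  the \<open>X i\<close> are nonnegative). These products are the values of the iid law on the orthant
  cylinders \<open>{x. \<forall>j<n. x j \<le> a j}\<close>, an intersection-stable generator of the product
  \<sigma>-algebra, so they determine the law of the sequence.\<close>

lemma Fexp_of_nonneg: "0 \<le> t \<Longrightarrow> Fexp \<theta> t = 1 - \<theta> * exp (- \<theta> * t)"
  by (simp add: Fexp_def algebra_simps)

lemma Fexp_of_neg: "t < 0 \<Longrightarrow> Fexp \<theta> t = 0"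
  by (simp add: Fexp_def)

lemma mono_Fexp:
  assumes "0 < \<theta>" "\<theta> \<le> 1"
  shows "mono (Fexp \<theta>)"
proof (rule monoI)
  fix x y :: real assume "x \<le> y"
  consider "y < 0" | "x < 0" "0 \<le> y" | "0 \<le> x" by linarith
  then show "Fexp \<theta> x \<le> Fexp \<theta> y"
  proof cases
    case 2
    have "\<theta> * exp (- \<theta> * y) \<le> 1 * 1"
      using assms 2 by (intro mult_mono) auto
    then show ?thesis using 2 by (simp add: Fexp_of_neg Fexp_of_nonneg)
  next
    case 3
    with \<open>x \<le> y\<close> assms show ?thesis by (simp add: Fexp_of_nonneg)
  qed (use \<open>x \<le> y\<close> in \<open>simp add: Fexp_of_neg\<close>)
qed

lemma Fexp_nonneg: "0 < \<theta> \<Longrightarrow> \<theta> \<le> 1 \<Longrightarrow> 0 \<le> Fexp \<theta> t"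
  using monoD[OF mono_Fexp, of \<theta> "min t (-1)" t] by (simp add: Fexp_of_neg)

lemma integral_one_minus_Fexp:
  assumes "0 \<le> t"
  shows "integral {0..t} (\<lambda>s. c - c * Fexp \<theta> s) = c * (1 - exp (- \<theta> * t))"
proof -
  have "integral {0..t} (\<lambda>s. c - c * Fexp \<theta> s) = integral {0..t} (\<lambda>s. c * \<theta> * exp (- \<theta> * s))"
    by (rule integral_cong) (simp add: Fexp_of_nonneg algebra_simps)
  also have "\<dots> = - c * exp (- \<theta> * t) - (- c * exp (- \<theta> * 0))"
  proof (rule integral_unique, rule fundamental_theorem_of_calculus[OF assms])
    fix x assume "x \<in> {0..t}"
    show "((\<lambda>s. - c * exp (- \<theta> * s)) has_vector_derivative c * \<theta> * exp (- \<theta> * x))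
            (at x within {0..t})"
      by (auto intro!: derivative_eq_intros simp: has_real_derivative_iff_has_vector_derivative[symmetric])
  qed
  finally show ?thesis by (simp add: algebra_simps)
qed

lemma linear_ode_solution:
  fixes I :: "real \<Rightarrow> real"
  assumes "0 \<le> t"
    and deriv: "\<And>x. x \<in> {0..t} \<Longrightarrow> (I has_real_derivative \<theta> * (c - I x)) (at x within {0..t})"
  shows "I t = c + (I 0 - c) * exp (- \<theta> * t)"
proof -
  define K where "K x = (I x - c) * exp (\<theta> * x)" for x
  have "(K has_real_derivative 0) (at x within {0..t})" if "x \<in> {0..t}" for x
  proof -
    have "(K has_real_derivative \<theta> * (c - I x) * exp (\<theta> * x) + (I x - c) * (exp (\<theta> * x) * \<theta>))
            (at x within {0..t})"
      unfolding K_def by (auto intro!: derivative_eq_intros deriv[OF that])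
    then show ?thesis by (simp add: algebra_simps)
  qed
  then obtain C where "\<And>x. x \<in> {0..t} \<Longrightarrow> K x = C"
    using has_field_derivative_zero_constant[of "{0..t}" K] by blast
  then have "K t = K 0" using \<open>0 \<le> t\<close> by auto
  then show ?thesis by (simp add: K_def exp_minus field_simps)
qed

text \<open>Monotonicity only serves to make \<open>H\<close> locally integrable.\<close>
lemma integral_equation_iff_eq_scaled_Fexp:
  fixes H :: "real \<Rightarrow> real"
  assumes mono: "mono_on {0..} H"
  shows "(\<forall>s\<ge>0. H s = (1 - \<theta>) * c + \<theta> * integral {0..s} (\<lambda>u. c - H u))
     \<longleftrightarrow> (\<forall>s\<ge>0. H s = c * Fexp \<theta> s)"
proof safe
  fix s :: real assume H: "\<forall>s\<ge>0. H s = c * Fexp \<theta> s" and "0 \<le> s"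
  have "integral {0..s} (\<lambda>u. c - H u) = integral {0..s} (\<lambda>u. c - c * Fexp \<theta> u)"
    by (rule integral_cong) (simp add: H)
  also have "\<dots> = c * (1 - exp (- \<theta> * s))"
    using \<open>0 \<le> s\<close> by (rule integral_one_minus_Fexp)
  finally show "H s = (1 - \<theta>) * c + \<theta> * integral {0..s} (\<lambda>u. c - H u)"
    using H \<open>0 \<le> s\<close> by (simp add: Fexp_of_nonneg) (simp add: algebra_simps)
next
  fix t :: real assume eq: "\<forall>s\<ge>0. H s = (1 - \<theta>) * c + \<theta> * integral {0..s} (\<lambda>u. c - H u)"
    and "0 \<le> t"
  define I where "I s = integral {0..s} (\<lambda>u. c - H u)" for s
  have "(\<lambda>u. c - H u) integrable_on {0..t}"
    using mono by (intro integrable_diff integrable_const_ivl integrable_on_mono_on)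
      (auto simp: mono_on_def)
  then have "continuous_on {0..t} I"
    unfolding I_def by (rule indefinite_integral_continuous_1)
  have integrand: "c - H u = \<theta> * (c - I u)" if "u \<in> {0..t}" for u
    using eq that by (simp add: I_def algebra_simps)
  have "continuous_on {0..t} (\<lambda>u. c - H u) \<longleftrightarrow> continuous_on {0..t} (\<lambda>u. \<theta> * (c - I u))"
    by (rule continuous_on_cong[OF refl integrand])
  with \<open>continuous_on {0..t} I\<close> have "continuous_on {0..t} (\<lambda>u. c - H u)"
    by (auto intro!: continuous_intros)
  then have "(I has_real_derivative c - H x) (at x within {0..t})" if "x \<in> {0..t}" for x
    unfolding I_def has_real_derivative_iff_has_vector_derivative
    by (rule integral_has_vector_derivative[OF _ that])
  then have "(I has_real_derivative \<theta> * (c - I x)) (at x within {0..t})" if "x \<in> {0..t}" for x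
    using that by (simp add: integrand)
  then have "I t = c + (I 0 - c) * exp (- \<theta> * t)"
    by (rule linear_ode_solution[OF \<open>0 \<le> t\<close>])
  then have "I t = c - c * exp (- \<theta> * t)"
    by (simp add: I_def)
  moreover have "H t = (1 - \<theta>) * c + \<theta> * I t"
    using eq \<open>0 \<le> t\<close> by (simp add: I_def)
  ultimately show "H t = c * Fexp \<theta> t"
    using \<open>0 \<le> t\<close> by (simp add: Fexp_of_nonneg) (simp add: algebra_simps)
qed

lemma eq_Fexp_iff_integral_equation:
  assumes "prob_distfun_nonneg F"
  shows "F = Fexp \<theta> \<longleftrightarrow> (\<forall>t\<ge>0. F t = (1 - \<theta>) + \<theta> * integral {0..t} (\<lambda>s. 1 - F s))"
proof -
  have "mono_on {0..} F" and F_neg: "\<And>t. t < 0 \<Longrightarrow> F t = 0"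
    using assms by (auto simp: prob_distfun_nonneg_def mono_def mono_on_def)
  have "F = Fexp \<theta> \<longleftrightarrow> (\<forall>t\<ge>0. F t = 1 * Fexp \<theta> t)"
    unfolding fun_eq_iff using F_neg by (metis Fexp_of_neg mult_1 not_le)
  also have "\<dots> \<longleftrightarrow> (\<forall>t\<ge>0. F t = (1 - \<theta>) * 1 + \<theta> * integral {0..t} (\<lambda>s. 1 - F s))"
    by (rule integral_equation_iff_eq_scaled_Fexp[OF \<open>mono_on {0..} F\<close>, symmetric])
  finally show ?thesis by simp
qed

lemma Fexp_continuous_from_right: "continuous (at_right a) (Fexp \<theta>)"
proof -
  define G where "G t = (if a < 0 then 0 else 1 - \<theta> * exp (- \<theta> * t))" for t
  have "\<forall>\<^sub>F t in at_right a. Fexp \<theta> t = G t"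
  proof (cases "a < 0")
    case True
    then show ?thesis
      unfolding eventually_at_right[OF True] by (auto simp: G_def Fexp_of_neg intro!: exI[of _ 0])
  next
    case False
    show ?thesis
      by (rule eventually_mono[OF eventually_at_right_less]) (use False in \<open>auto simp: G_def Fexp_of_nonneg\<close>)
  qed
  moreover have "(G \<longlongrightarrow> Fexp \<theta> a) (at_right a)"
    unfolding G_def by (cases "a < 0") (auto simp: Fexp_of_neg Fexp_of_nonneg intro!: tendsto_eq_intros)
  ultimately show ?thesis
    unfolding continuous_within by (simp add: tendsto_cong)
qed

lemma Fexp_at_bot: "(Fexp \<theta> \<longlongrightarrow> 0) at_bot"
  by (rule tendsto_eventually)
     (auto simp: eventually_at_bot_linorder Fexp_of_neg intro!: exI[of _ "-1"])

lemma Fexp_at_top: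
  assumes "0 < \<theta>"
  shows "(Fexp \<theta> \<longlongrightarrow> 1) at_top"
proof -
  have "\<forall>\<^sub>F t in at_top. 1 - \<theta> * exp (- \<theta> * t) = Fexp \<theta> t"
    by (auto simp: eventually_at_top_linorder Fexp_of_nonneg intro!: exI[of _ 0])
  moreover have "((\<lambda>t. 1 - \<theta> * exp (- \<theta> * t)) \<longlongrightarrow> 1) at_top"
    using assms by real_asymp
  ultimately show ?thesis by (simp add: tendsto_cong)
qed

lemma real_distribution_exp_law: "0 < \<theta> \<Longrightarrow> \<theta> \<le> 1 \<Longrightarrow> real_distribution (exp_law \<theta>)"
  unfolding exp_law_def
  by (rule real_distribution_interval_measure)
     (auto intro: monoD[OF mono_Fexp] Fexp_continuous_from_right Fexp_at_bot Fexp_at_top)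

lemma emeasure_exp_law_atMost:
  "0 < \<theta> \<Longrightarrow> \<theta> \<le> 1 \<Longrightarrow> emeasure (exp_law \<theta>) {..x} = Fexp \<theta> x"
  unfolding exp_law_def
  by (rule emeasure_interval_measure_Iic)
     (auto intro: monoD[OF mono_Fexp] Fexp_continuous_from_right Fexp_at_bot)

lemma sets_PiM_nat_real_orthant_cylinders:
  "sets (PiM UNIV (\<lambda>_::nat. borel :: real measure)) =
     sigma_sets UNIV {{x. \<forall>j<n. x j \<le> a j} | n a. True}"
proof -
  let ?P = "{{f \<in> \<Pi>\<^sub>E i\<in>UNIV. UNIV. \<forall>i\<in>J. f i \<in> A i} | A J.
              J \<in> range lessThan \<and> A \<in> Pi J (\<lambda>_. range atMost)} :: (nat \<Rightarrow> real) set set"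
  have cover: "\<exists>S\<subseteq>range atMost. countable S \<and> (UNIV :: real set) = \<Union>S"
    by (intro exI[of _ "range (\<lambda>k::nat. {..real k})"]) (auto intro: real_arch_simple)
  have "sets (PiM UNIV (\<lambda>_::nat. borel :: real measure)) = sets (sigma (\<Pi>\<^sub>E i\<in>UNIV. UNIV) ?P)"
    unfolding borel_eq_atMost by (rule sets_PiM_sigma) (use cover in auto)
  moreover have "?P = {{x. \<forall>j<n. x j \<le> a j} | n a. True}"
  proof (intro equalityI subsetI)
    fix S :: "(nat \<Rightarrow> real) set" assume "S \<in> ?P"
    then obtain A n where S: "S = {f \<in> \<Pi>\<^sub>E i\<in>UNIV. UNIV. \<forall>i\<in>{..<n}. f i \<in> A i}"
      and A: "A \<in> Pi {..<n} (\<lambda>_. range atMost)"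
      by blast
    then have "\<forall>i\<in>{..<n}. \<exists>a. A i = {..a}" by (auto simp: Pi_iff)
    then obtain a where "\<forall>i\<in>{..<n}. A i = {..a i}" by (auto dest!: bchoice)
    then have "S = {x. \<forall>j<n. x j \<le> a j}" using S by auto
    then show "S \<in> {{x. \<forall>j<n. x j \<le> a j} | n a. True}" by blast
  next
    fix S :: "(nat \<Rightarrow> real) set" assume "S \<in> {{x. \<forall>j<n. x j \<le> a j} | n a. True}"
    then obtain n a where "S = {x. \<forall>j<n. x j \<le> a j}" by blast
    then show "S \<in> ?P"
      by (intro CollectI exI[of _ "\<lambda>j. {..a j}"] exI[of _ "{..<n}"]) auto
  qed
  ultimately show ?thesis by (simp add: sets_measure_of_conv)
qed

lemma measure_eqI_orthant_cylinders:
  fixes P Q :: "(nat \<Rightarrow> real) measure"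
  assumes sets_P: "sets P = sets (PiM UNIV (\<lambda>_. borel))"
    and sets_Q: "sets Q = sets (PiM UNIV (\<lambda>_. borel))"
    and "finite_measure P"
    and eq: "\<And>n a. emeasure P {x. \<forall>j<n. x j \<le> a j} = emeasure Q {x. \<forall>j<n. x j \<le> a j}"
  shows "P = Q"
proof (rule measure_eqI_generator_eq[where \<Omega>=UNIV and A="\<lambda>_. UNIV"
    and E="{{x. \<forall>j<n. x j \<le> a j} | n a. True}"])
  let ?E = "{{x. \<forall>j<n. x j \<le> a j} | n a. True} :: (nat \<Rightarrow> real) set set"
  show "Int_stable ?E"
  proof (rule Int_stableI)
    fix S T assume "S \<in> ?E" "T \<in> ?E"
    then obtain m n :: nat and a b :: "nat \<Rightarrow> real"
      where S: "S = {x. \<forall>j<m. x j \<le> a j}" and T: "T = {x. \<forall>j<n. x j \<le> b j}"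
      by blast
    define c where "c j = min (if j < m then a j else b j) (if j < n then b j else a j)" for j
    have "S \<inter> T = {x. \<forall>j<max m n. x j \<le> c j}"
      unfolding S T c_def by (auto simp: less_max_iff_disj)
    then show "S \<inter> T \<in> ?E" by blast
  qed
  show "sets P = sigma_sets UNIV ?E" "sets Q = sigma_sets UNIV ?E"
    using sets_P sets_Q by (simp_all add: sets_PiM_nat_real_orthant_cylinders)
  show "range (\<lambda>_::nat. UNIV) \<subseteq> ?E" by auto
  show "emeasure P UNIV \<noteq> \<infinity>"
    using finite_measure.emeasure_finite[OF \<open>finite_measure P\<close>, of UNIV] by simp
qed (use eq in auto)

lemma emeasure_seq_law_orthant:
  assumes "prob_space M" and X: "\<And>i. X i \<in> borel_measurable M"
  shows "emeasure (seq_law M X) {x. \<forall>j<n. x j \<le> a j} = fdd M X n a"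
proof -
  have "(\<lambda>\<omega> i. X i \<omega>) \<in> M \<rightarrow>\<^sub>M PiM UNIV (\<lambda>_. borel)"
    by (rule measurable_PiM_single') (auto simp: X)
  moreover have "{x. \<forall>j<n. x j \<le> a j} \<in> sets (PiM UNIV (\<lambda>_::nat. borel :: real measure))"
    unfolding sets_PiM_nat_real_orthant_cylinders by (rule sigma_sets.Basic) blast
  ultimately have "emeasure (seq_law M X) {x. \<forall>j<n. x j \<le> a j}
      = emeasure M ((\<lambda>\<omega> i. X i \<omega>) -` {x. \<forall>j<n. x j \<le> a j} \<inter> space M)"
    unfolding seq_law_def by (rule emeasure_distr)
  also have "(\<lambda>\<omega> i. X i \<omega>) -` {x. \<forall>j<n. x j \<le> a j} \<inter> space M = {\<omega> \<in> space M. \<forall>j<n. X j \<omega> \<le> a j}"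
    by auto
  also have "emeasure M \<dots> = fdd M X n a"
    unfolding fdd_def using prob_space.finite_measure[OF \<open>prob_space M\<close>] by (rule finite_measure.emeasure_eq_measure)
  finally show ?thesis .
qed

lemma emeasure_exp_seq_law_orthant:
  assumes "0 < \<theta>" "\<theta> \<le> 1"
  shows "emeasure (exp_seq_law \<theta>) {x. \<forall>j<n. x j \<le> a j} = (\<Prod>j<n. Fexp \<theta> (a j))"
proof -
  have "{x. \<forall>j<n. x j \<le> a j} = prod_emb UNIV (\<lambda>_. exp_law \<theta>) {..<n} (\<Pi>\<^sub>E j\<in>{..<n}. {..a j})"
    by (rule set_eqI) (auto simp: prod_emb_iff restrict_PiE_iff exp_law_def)
  then have "emeasure (exp_seq_law \<theta>) {x. \<forall>j<n. x j \<le> a j} = (\<Prod>j<n. emeasure (exp_law \<theta>) {..a j})"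
    unfolding exp_seq_law_def using real_distribution_exp_law[OF assms]
    by (simp add: emeasure_PiM_emb real_distribution_def exp_law_def)
  then show ?thesis
    by (simp add: emeasure_exp_law_atMost[OF assms] prod_ennreal Fexp_nonneg[OF assms])
qed

lemma seq_law_eq_exp_seq_law_iff_fdd:
  assumes "0 < \<theta>" "\<theta> \<le> 1" "prob_space M" "\<And>i. X i \<in> borel_measurable M"
  shows "seq_law M X = exp_seq_law \<theta> \<longleftrightarrow> (\<forall>n t. fdd M X n t = (\<Prod>j<n. Fexp \<theta> (t j)))"
proof
  assume law: "seq_law M X = exp_seq_law \<theta>"
  have "ennreal (fdd M X n t) = emeasure (seq_law M X) {x. \<forall>j<n. x j \<le> t j}" for n t
    using emeasure_seq_law_orthant[of M X] assms by simp
  also have "\<dots> n t = ennreal (\<Prod>j<n. Fexp \<theta> (t j))" for n t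
    unfolding law by (rule emeasure_exp_seq_law_orthant[OF assms(1,2)])
  finally have "ennreal (fdd M X n t) = ennreal (\<Prod>j<n. Fexp \<theta> (t j))" for n t .
  moreover have "0 \<le> fdd M X n t" "0 \<le> (\<Prod>j<n. Fexp \<theta> (t j))" for n t
    by (simp_all add: fdd_def Fexp_nonneg[OF assms(1,2)] prod_nonneg)
  ultimately show "\<forall>n t. fdd M X n t = (\<Prod>j<n. Fexp \<theta> (t j))"
    by (simp add: ennreal_inj)
next
  assume prod: "\<forall>n t. fdd M X n t = (\<Prod>j<n. Fexp \<theta> (t j))"
  show "seq_law M X = exp_seq_law \<theta>"
  proof (rule measure_eqI_orthant_cylinders)
    show "sets (seq_law M X) = sets (PiM UNIV (\<lambda>_. borel))"
      by (simp add: seq_law_def)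
    show "sets (exp_seq_law \<theta>) = sets (PiM UNIV (\<lambda>_. borel))"
      unfolding exp_seq_law_def by (rule sets_PiM_cong) (simp_all add: exp_law_def)
    show "finite_measure (seq_law M X)"
      unfolding seq_law_def using assms(3,4)
      by (intro prob_space.finite_measure prob_space.prob_space_distr measurable_PiM_single') auto
  next
    fix n a
    have "emeasure (seq_law M X) {x. \<forall>j<n. x j \<le> a j} = fdd M X n a"
      by (rule emeasure_seq_law_orthant[of M X, OF assms(3,4)])
    also have "\<dots> = emeasure (exp_seq_law \<theta>) {x. \<forall>j<n. x j \<le> a j}"
      by (simp add: prod emeasure_exp_seq_law_orthant[OF assms(1,2)])
    finally show "emeasure (seq_law M X) {x. \<forall>j<n. x j \<le> a j}
        = emeasure (exp_seq_law \<theta>) {x. \<forall>j<n. x j \<le> a j}" .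
  qed
qed

lemma fdd_0: "prob_space M \<Longrightarrow> fdd M X 0 t = 1"
  by (simp add: fdd_def prob_space.prob_space)

lemma fdd_mono:
  assumes "prob_space M" and X: "\<And>i. X i \<in> borel_measurable M"
    and "\<And>j. j < n \<Longrightarrow> s j \<le> t j"
  shows "fdd M X n s \<le> fdd M X n t"
  unfolding fdd_def
proof (rule finite_measure.finite_measure_mono)
  show "finite_measure M" using \<open>prob_space M\<close> by (rule prob_space.finite_measure)
  show "{\<omega> \<in> space M. \<forall>j<n. X j \<omega> \<le> s j} \<subseteq> {\<omega> \<in> space M. \<forall>j<n. X j \<omega> \<le> t j}"
    using assms(3) by force
  show "{\<omega> \<in> space M. \<forall>j<n. X j \<omega> \<le> t j} \<in> sets M"
    using X by measurable
qed

lemma fdd_eq_0_if_negative: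
  assumes "\<And>i \<omega>. \<omega> \<in> space M \<Longrightarrow> 0 \<le> X i \<omega>" and "j < n" "t j < 0"
  shows "fdd M X n t = 0"
proof -
  have empty: "{\<omega> \<in> space M. \<forall>j<n. X j \<omega> \<le> t j} = {}"
  proof (rule equals0I)
    fix \<omega> assume "\<omega> \<in> {\<omega> \<in> space M. \<forall>j<n. X j \<omega> \<le> t j}"
    then have "0 \<le> X j \<omega>" "X j \<omega> \<le> t j" using assms by auto
    with \<open>t j < 0\<close> show False by linarith
  qed
  show ?thesis unfolding fdd_def empty by simp
qed

lemma fdd_recursion_iff_product:
  fixes X :: "nat \<Rightarrow> 'a \<Rightarrow> real"
  assumes M: "prob_space M" and X: "\<And>i. X i \<in> borel_measurable M"
    and nonneg: "\<And>i \<omega>. \<omega> \<in> space M \<Longrightarrow> 0 \<le> X i \<omega>"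
  shows "(\<forall>d t. (\<forall>j\<le>d. 0 \<le> t j) \<longrightarrow>
            fdd M X (Suc d) t =
              (1 - \<theta>) * fdd M X d (\<lambda>j. t (Suc j))
              + \<theta> * integral {0..t 0} (\<lambda>s. fdd M X d (\<lambda>j. t (Suc j)) - fdd M X (Suc d) (t(0 := s))))
     \<longleftrightarrow> (\<forall>n t. fdd M X n t = (\<Prod>j<n. Fexp \<theta> (t j)))"
  (is "(\<forall>d t. _ \<longrightarrow> ?rec d t) \<longleftrightarrow> _")
proof -
  have rec_iff: "(\<forall>s\<ge>0. ?rec d (t(0 := s)))
      \<longleftrightarrow> (\<forall>s\<ge>0. fdd M X (Suc d) (t(0 := s)) = fdd M X d (\<lambda>j. t (Suc j)) * Fexp \<theta> s)" for d t
  proof -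
    have "mono_on {0..} (\<lambda>s. fdd M X (Suc d) (t(0 := s)))"
      by (rule mono_onI) (auto intro: fdd_mono[OF M X])
    from integral_equation_iff_eq_scaled_Fexp[OF this] show ?thesis by simp
  qed
  show ?thesis
  proof safe
    fix n t
    assume rec: "\<forall>d t. (\<forall>j\<le>d. 0 \<le> t j) \<longrightarrow> ?rec d t"
    show "fdd M X n t = (\<Prod>j<n. Fexp \<theta> (t j))"
    proof (induction n arbitrary: t)
      case 0
      show ?case using M by (simp add: fdd_0)
    next
      case (Suc d)
      show ?case
      proof (cases "\<exists>j\<le>d. t j < 0")
        case True
        then obtain j where "j \<le> d" "t j < 0" by blast
        then have "fdd M X (Suc d) t = 0"
          by (intro fdd_eq_0_if_negative[of M X j]) (auto simp: nonneg)
        moreover have "(\<Prod>j<Suc d. Fexp \<theta> (t j)) = 0"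
          using \<open>j \<le> d\<close> \<open>t j < 0\<close> by (intro prod_zero) (auto simp: Fexp_of_neg intro!: bexI[of _ j])
        ultimately show ?thesis by simp
      next
        case False
        then have "\<forall>s\<ge>0. ?rec d (t(0 := s))"
          using rec by (auto simp: not_less)
        then have "\<forall>s\<ge>0. fdd M X (Suc d) (t(0 := s)) = fdd M X d (\<lambda>j. t (Suc j)) * Fexp \<theta> s"
          by (rule rec_iff[THEN iffD1])
        moreover have "0 \<le> t 0" using False by auto
        ultimately have "fdd M X (Suc d) (t(0 := t 0)) = fdd M X d (\<lambda>j. t (Suc j)) * Fexp \<theta> (t 0)"
          by blast
        then show ?thesis
          by (simp add: Suc.IH prod.lessThan_Suc_shift del: prod.lessThan_Suc)
      qed
    qed
  next
    fix d and t :: "nat \<Rightarrow> real"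
    assume prod: "\<forall>n t. fdd M X n t = (\<Prod>j<n. Fexp \<theta> (t j))" and "\<forall>j\<le>d. 0 \<le> t j"
    then have "\<forall>s\<ge>0. fdd M X (Suc d) (t(0 := s)) = fdd M X d (\<lambda>j. t (Suc j)) * Fexp \<theta> s"
      by (simp add: prod.lessThan_Suc_shift del: prod.lessThan_Suc)
    then have "\<forall>s\<ge>0. ?rec d (t(0 := s))"
      by (rule rec_iff[THEN iffD2])
    moreover have "0 \<le> t 0" using \<open>\<forall>j\<le>d. 0 \<le> t j\<close> by simp
    ultimately have "?rec d (t(0 := t 0))" by blast
    then show "?rec d t" by (simp only: fun_upd_triv)
  qed
qed

theorem mainTheorem13:
  fixes \<theta> :: real
  assumes "0 < \<theta>" and "\<theta> \<le> 1"
  shows "(\<forall>F. prob_distfun_nonneg F \<longrightarrow>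
            (F = Fexp \<theta> \<longleftrightarrow>
             (\<forall>t\<ge>0. F t = (1 - \<theta>) + \<theta> * integral {0..t} (\<lambda>s. 1 - F s))))
       \<and> (\<forall>(M :: 'a measure) (X :: nat \<Rightarrow> 'a \<Rightarrow> real).
            prob_space M \<and> (\<forall>i. X i \<in> borel_measurable M)
            \<and> (\<forall>i. \<forall>\<omega>\<in>space M. 0 \<le> X i \<omega>) \<and> stationary_seq M X \<longrightarrow>
            (seq_law M X = exp_seq_law \<theta> \<longleftrightarrow>
             (\<forall>d t. (\<forall>j\<le>d. 0 \<le> t j) \<longrightarrow>
                fdd M X (Suc d) t =
                  (1 - \<theta>) * fdd M X d (\<lambda>j. t (Suc j))
                  + \<theta> * integral {0..t 0}
                      (\<lambda>s. fdd M X d (\<lambda>j. t (Suc j)) - fdd M X (Suc d) (t(0 := s))))))"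
  apply (intro conjI allI impI)
  subgoal for F by (rule eq_Fexp_iff_integral_equation)
  subgoal for M X
    using seq_law_eq_exp_seq_law_iff_fdd[OF assms, of M X] fdd_recursion_iff_product[of M X \<theta>] by auto
  done

end
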